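(* Let $A$ be a finitely generated $K$-algebra with a filtration $\mathcal{F}=\{V_n\}_{n\ge0}$. Fix an integer $k\ge1$ and let $\mathcal{G}=\{W_n\}_{n\ge0}$ be the filtration $W_n:=V_{nk}$. Then $\mathrm{h}_{\mathrm{alg}}(A,\mathcal{G})=k\cdot\mathrm{h}_{\mathrm{alg}}(A,\mathcal{F})$.
   Context: A filtration of a $K$-algebra $A$ is a family $\{V_n\}_{n\ge0}$ of subspaces with $0=V_0\subseteq V_1\subseteq\cdots$, $A=\bigcup_nV_n$ and $V_nV_m\subseteq V_{n+m}$; the quotients $V_n/V_{n-1}$ are assumed finite-dimensional. The algebraic entropy is $\mathrm{h}_{\mathrm{alg}}(A,\mathcal{F})=0$ if $A$ is finite-dimensional and otherwise $\limsup_{n\to\infty}\frac{\log\dim(V_n/V_{n-1})}{n}$ (with $\log0=-\infty$). *)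

theory Defs
  imports Complex_Main "HOL-Library.Extended_Real"
begin

definition is_K_algebra :: "('k::field \<Rightarrow> 'a::ring_1 \<Rightarrow> 'a) \<Rightarrow> bool" where
  "is_K_algebra scale \<longleftrightarrow> vector_space scale \<and>
     (\<forall>c x y. scale c (x * y) = scale c x * y \<and> scale c (x * y) = x * scale c y)"

definition gen_subalgebra :: "('k::field \<Rightarrow> 'a::ring_1 \<Rightarrow> 'a) \<Rightarrow> 'a set \<Rightarrow> 'a set" where
  "gen_subalgebra scale S = module.span scale {prod_list xs | xs. set xs \<subseteq> S}"

definition finitely_generated :: "('k::field \<Rightarrow> 'a::ring_1 \<Rightarrow> 'a) \<Rightarrow> bool" where
  "finitely_generated scale \<longleftrightarrow> (\<exists>S. finite S \<and> gen_subalgebra scale S = UNIV)"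

definition finite_dim_algebra :: "('k::field \<Rightarrow> 'a::ring_1 \<Rightarrow> 'a) \<Rightarrow> bool" where
  "finite_dim_algebra scale \<longleftrightarrow> (\<exists>B. finite B \<and> module.span scale B = UNIV)"

text \<open>dim(V_n / V_(n-1)): least number of vectors of V_n spanning V_n modulo V_(n-1).\<close>
definition quot_dim :: "('k::field \<Rightarrow> 'a::ring_1 \<Rightarrow> 'a) \<Rightarrow> 'a set \<Rightarrow> 'a set \<Rightarrow> nat" where
  "quot_dim scale U W = (LEAST d. \<exists>B. finite B \<and> card B = d \<and> B \<subseteq> U \<and>
        U \<subseteq> module.span scale (W \<union> B))"

definition is_filtration :: "('k::field \<Rightarrow> 'a::ring_1 \<Rightarrow> 'a) \<Rightarrow> (nat \<Rightarrow> 'a set) \<Rightarrow> bool" where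
  "is_filtration scale V \<longleftrightarrow>
     V 0 = {0} \<and>
     (\<forall>n. module.subspace scale (V n)) \<and>
     (\<forall>n. V n \<subseteq> V (Suc n)) \<and>
     (\<Union>n. V n) = UNIV \<and>
     (\<forall>n m x y. x \<in> V n \<longrightarrow> y \<in> V m \<longrightarrow> x * y \<in> V (n + m)) \<and>
     (\<forall>n. \<exists>B. finite B \<and> V (Suc n) \<subseteq> module.span scale (V n \<union> B))"

definition elog :: "nat \<Rightarrow> ereal" where
  "elog d = (if d = 0 then -\<infinity> else ereal (ln (real d)))"

definition h_alg :: "('k::field \<Rightarrow> 'a::ring_1 \<Rightarrow> 'a) \<Rightarrow> (nat \<Rightarrow> 'a set) \<Rightarrow> ereal" where
  "h_alg scale V = (if finite_dim_algebra scale then 0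
     else limsup (\<lambda>n. elog (quot_dim scale (V n) (V (n - 1))) / ereal (real n)))"

end

theory Submission
  imports Defs "HOL-Analysis.Extended_Real_Limits"
begin

(* Write d j = dim (V j / V (j - 1)) and e n = dim (V (n k) / V ((n - 1) k)), the codimension
   of the n-th block (n - 1) k < j <= n k. Codimension is monotone and subadditive, so every
   d j of the block is at most e n, and e n is at most k times the largest of them. Taking
   logarithms and dividing by n, which equals j / k up to a factor tending to 1, the error
   ln k / n vanishes in the limit and the two limsups differ exactly by the factor k. *)

context vector_space
begin

lemma span_Un_trans:
  assumes "U \<subseteq> span (M \<union> B)" and "M \<subseteq> span (W \<union> C)"
  shows "U \<subseteq> span (W \<union> (B \<union> C))"
proof -
  have "M \<union> B \<subseteq> span (W \<union> (B \<union> C))"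
    using assms(2) span_mono[of "W \<union> C" "W \<union> (B \<union> C)"] span_superset[of "W \<union> (B \<union> C)"] by blast
  then show ?thesis
    using assms(1) span_minimal[OF _ subspace_span] by blast
qed

(* In the step from B to insert b B: unless U \<subseteq> span (W \<union> B), some u \<in> U outside
   span (W \<union> B) can replace b (exchange lemma), and W grows to span (insert u W). *)
lemma spanning_complement_within:
  assumes "subspace W" "subspace U" "W \<subseteq> U" "finite B" "U \<subseteq> span (W \<union> B)"
  shows "\<exists>B'. finite B' \<and> B' \<subseteq> U \<and> card B' \<le> card B \<and> U \<subseteq> span (W \<union> B')"
  using assms(4,1,3,5)
proof (induction B arbitrary: W rule: finite_induct)
  case empty
  then show ?case by (intro exI[of _ "{}"]) (simp add: span_eq_iff[THEN iffD2])
next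
  case (insert b B)
  show ?case
  proof (cases "U \<subseteq> span (W \<union> B)")
    case True
    with insert.IH[OF insert.prems(1,2)] insert.hyps show ?thesis by fastforce
  next
    case False
    then obtain u where u: "u \<in> U" "u \<notin> span (W \<union> B)" by blast
    then have "u \<in> span (insert b (W \<union> B))" using insert.prems(3) by auto
    from in_span_insert[OF this u(2)] have b: "b \<in> span (insert u (W \<union> B))" .
    let ?W = "span (insert u W)"
    have "insert b (W \<union> B) \<subseteq> span (?W \<union> B)"
      using b span_mono[of "insert u (W \<union> B)" "?W \<union> B"] span_superset[of "insert u W"]
        span_superset[of "?W \<union> B"] by blast
    then have "span (W \<union> insert b B) \<subseteq> span (?W \<union> B)"
      by (simp add: span_minimal)
    then have "U \<subseteq> span (?W \<union> B)"
      using insert.prems(3) by blast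
    moreover have "?W \<subseteq> U"
      using u(1) insert.prems(2) assms(2) by (intro span_minimal) auto
    ultimately obtain B' where B': "finite B'" "B' \<subseteq> U" "card B' \<le> card B" "U \<subseteq> span (?W \<union> B')"
      using insert.IH[of ?W] subspace_span by blast
    have "U \<subseteq> span (W \<union> insert u B')"
      using span_Un_trans[OF B'(4), of W "{u}"] span_superset[of "insert u W"] by auto
    with B' u(1) insert.hyps show ?thesis
      by (intro exI[of _ "insert u B'"]) (auto simp: card_insert_if)
  qed
qed

end

context
  fixes scale :: "'k::field \<Rightarrow> 'a::ring_1 \<Rightarrow> 'a"
  assumes vs: "vector_space scale"
begin

interpretation vector_space scale by (rule vs)

lemma quot_dim_le_card:
  assumes "subspace W" "subspace U" "W \<subseteq> U" "finite B" "U \<subseteq> span (W \<union> B)"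
  shows "quot_dim scale U W \<le> card B"
proof -
  obtain B' where "finite B'" "B' \<subseteq> U" "card B' \<le> card B" "U \<subseteq> span (W \<union> B')"
    using spanning_complement_within[OF assms] by blast
  then have "quot_dim scale U W \<le> card B'"
    unfolding quot_dim_def by (intro Least_le) blast
  with \<open>card B' \<le> card B\<close> show ?thesis by linarith
qed

lemma quot_dim_witness:
  assumes "subspace W" "subspace U" "W \<subseteq> U" "finite B" "U \<subseteq> span (W \<union> B)"
  obtains B' where "finite B'" "card B' = quot_dim scale U W" "U \<subseteq> span (W \<union> B')"
proof -
  have "\<exists>d B'. finite B' \<and> card B' = d \<and> B' \<subseteq> U \<and> U \<subseteq> span (W \<union> B')"
    using spanning_complement_within[OF assms] by blast
  from LeastI_ex[OF this] show ?thesis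
    unfolding quot_dim_def[symmetric] using that by blast
qed

lemma quot_dim_mono:
  assumes "subspace W" "subspace W'" "subspace U'" "subspace U"
    and "W \<subseteq> W'" "W' \<subseteq> U'" "U' \<subseteq> U"
    and "finite B" "U \<subseteq> span (W \<union> B)"
  shows "quot_dim scale U' W' \<le> quot_dim scale U W"
proof -
  obtain C where C: "finite C" "card C = quot_dim scale U W" "U \<subseteq> span (W \<union> C)"
    using quot_dim_witness[OF assms(1,4) _ assms(8,9)] assms(5-7) by blast
  have "U' \<subseteq> span (W' \<union> C)"
    using C(3) assms(5,7) span_mono[of "W \<union> C" "W' \<union> C"] by blast
  from quot_dim_le_card[OF assms(2,3,6) C(1) this] C(2) show ?thesis by simp
qed

lemma quot_dim_triangle:
  assumes "subspace W" "subspace M" "subspace U" "W \<subseteq> M" "M \<subseteq> U"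
    and "finite B" "U \<subseteq> span (M \<union> B)" and "finite C" "M \<subseteq> span (W \<union> C)"
  shows "quot_dim scale U W \<le> quot_dim scale U M + quot_dim scale M W"
proof -
  obtain B' where B': "finite B'" "card B' = quot_dim scale U M" "U \<subseteq> span (M \<union> B')"
    using quot_dim_witness[OF assms(2,3,5,6,7)] .
  obtain C' where C': "finite C'" "card C' = quot_dim scale M W" "M \<subseteq> span (W \<union> C')"
    using quot_dim_witness[OF assms(1,2,4,8,9)] .
  have "quot_dim scale U W \<le> card (B' \<union> C')"
    using assms(4,5) B'(1) C'(1) span_Un_trans[OF B'(3) C'(3)]
    by (intro quot_dim_le_card[OF assms(1,3)]) auto
  also have "\<dots> \<le> card B' + card C'" by (rule card_Un_le)
  finally show ?thesis using B'(2) C'(2) by simp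
qed

end

context
  fixes scale :: "'k::field \<Rightarrow> 'a::ring_1 \<Rightarrow> 'a" and V :: "nat \<Rightarrow> 'a set"
  assumes vs: "vector_space scale" and filt: "is_filtration scale V"
begin

interpretation vector_space scale by (rule vs)

lemma filtration_subspace: "subspace (V n)"
  using filt by (simp add: is_filtration_def)

lemma filtration_mono:
  assumes "a \<le> b"
  shows "V a \<subseteq> V b"
proof -
  have "V n \<subseteq> V (Suc n)" for n
    using filt by (simp add: is_filtration_def)
  from lift_Suc_mono_le[of V, OF this assms] show ?thesis .
qed

lemma filtration_finite_step: "\<exists>B. finite B \<and> V (Suc n) \<subseteq> span (V n \<union> B)"
  using filt by (simp add: is_filtration_def)

lemma filtration_finite_extension:
  assumes "a \<le> b"
  shows "\<exists>B. finite B \<and> V b \<subseteq> span (V a \<union> B)"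
  using assms
proof (induction b rule: dec_induct)
  case base
  show ?case using span_superset[of "V a"] by (intro exI[of _ "{}"]) auto
next
  case (step b)
  obtain B where B: "finite B" "V b \<subseteq> span (V a \<union> B)" using step.IH by blast
  obtain C where C: "finite C" "V (Suc b) \<subseteq> span (V b \<union> C)"
    using filtration_finite_step by blast
  show ?case using span_Un_trans[OF C(2) B(2)] B(1) C(1) by blast
qed

lemma quot_dim_filtration_mono:
  assumes "a \<le> a'" "a' \<le> b'" "b' \<le> b"
  shows "quot_dim scale (V b') (V a') \<le> quot_dim scale (V b) (V a)"
proof -
  obtain B where "finite B" "V b \<subseteq> span (V a \<union> B)"
    using filtration_finite_extension[of a b] assms by auto
  from quot_dim_mono[OF vs filtration_subspace filtration_subspace filtration_subspace
      filtration_subspace filtration_mono filtration_mono filtration_mono this] assms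
  show ?thesis by blast
qed

lemma quot_dim_filtration_le_sum:
  "quot_dim scale (V (m + k)) (V m) \<le> (\<Sum>i<k. quot_dim scale (V (Suc (m + i))) (V (m + i)))"
proof (induction k)
  case 0
  show ?case
    using quot_dim_le_card[OF vs filtration_subspace filtration_subspace, of m m "{}"]
      span_superset[of "V m"] by simp
next
  case (Suc k)
  obtain B where B: "finite B" "V (m + Suc k) \<subseteq> span (V (m + k) \<union> B)"
    using filtration_finite_extension[of "m + k" "m + Suc k"] by auto
  obtain C where C: "finite C" "V (m + k) \<subseteq> span (V m \<union> C)"
    using filtration_finite_extension[of m "m + k"] by auto
  have "quot_dim scale (V (m + Suc k)) (V m)
      \<le> quot_dim scale (V (m + Suc k)) (V (m + k)) + quot_dim scale (V (m + k)) (V m)"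
    using quot_dim_triangle[OF vs filtration_subspace filtration_subspace filtration_subspace
        filtration_mono filtration_mono B C] by simp
  with Suc.IH show ?case by simp
qed

lemma quot_dim_filtration_step_le_block:
  assumes "(n - 1) * k < j" "j \<le> n * k"
  shows "quot_dim scale (V j) (V (j - 1)) \<le> quot_dim scale (V (n * k)) (V ((n - 1) * k))"
  using assms by (intro quot_dim_filtration_mono) auto

lemma quot_dim_filtration_block_le_step:
  assumes "1 \<le> k" "1 \<le> n"
  shows "\<exists>j. (n - 1) * k < j \<and> j \<le> n * k \<and>
    quot_dim scale (V (n * k)) (V ((n - 1) * k)) \<le> k * quot_dim scale (V j) (V (j - 1))"
proof -
  define m where "m = (n - 1) * k"
  define d where "d i = quot_dim scale (V (Suc (m + i))) (V (m + i))" for i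
  have "Max (d ` {..<k}) \<in> d ` {..<k}"
    using assms(1) by (intro Max_in) (auto simp: lessThan_empty_iff)
  then obtain i where i: "i < k" "d i = Max (d ` {..<k})"
    by (metis imageE lessThan_iff)
  have d_le: "d i' \<le> d i" if "i' < k" for i'
    unfolding i(2) using that by (intro Max_ge) auto
  have mk: "m + k = n * k"
    using assms(2) unfolding m_def by (cases n) auto
  have "quot_dim scale (V (n * k)) (V m) \<le> (\<Sum>i'<k. d i')"
    using quot_dim_filtration_le_sum[of m k] unfolding d_def mk .
  also have "\<dots> \<le> k * d i"
    using sum_bounded_above[of "{..<k}" d "d i"] d_le by simp
  finally have "quot_dim scale (V (n * k)) (V m) \<le> k * d i" .
  moreover have "(n - 1) * k < Suc (m + i)" "Suc (m + i) \<le> n * k"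
    using i(1) mk unfolding m_def by simp_all
  ultimately show ?thesis
    unfolding d_def m_def[symmetric] by (intro exI[of _ "Suc (m + i)"]) simp
qed

end

definition exp_growth_rate :: "(nat \<Rightarrow> nat) \<Rightarrow> ereal" where
  "exp_growth_rate d = limsup (\<lambda>n. elog (d n) / ereal (real n))"

lemma elog_div_of_nat:
  "0 < n \<Longrightarrow> elog m / ereal (real n) = (if m = 0 then -\<infinity> else ereal (ln (real m) / real n))"
  by (simp add: elog_def)

lemma limsup_comp_filterlim_le:
  fixes f :: "nat \<Rightarrow> 'a::complete_lattice"
  assumes "filterlim r sequentially sequentially"
  shows "limsup (\<lambda>n. f (r n)) \<le> limsup f"
proof -
  have "limsup (\<lambda>n. f (r n)) \<le> Limsup (filtermap r sequentially) f"
    by (rule Limsup_filtermap_ge)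
  also have "\<dots> \<le> limsup f"
    using assms unfolding filterlim_def Limsup_def le_filter_def
    by (auto intro!: INF_superset_mono)
  finally show ?thesis .
qed

lemma elog_div_le_blockwise:
  assumes k: "1 \<le> k" and n: "0 < n" and j: "0 < j" "j \<le> n * k" and e: "e \<le> k * d"
  shows "elog e / ereal (real n)
    \<le> ereal (ln (real k) / real n) + ereal (real k) * (elog d / ereal (real j))"
proof (cases "e = 0")
  case True
  then show ?thesis using n by (simp add: elog_div_of_nat)
next
  case False
  then have d_pos: "d \<noteq> 0" using e by (metis le_zero_eq mult_0_right)
  have "ln (real e) \<le> ln (real k * real d)"
    using e False k d_pos by (subst ln_le_cancel_iff) (simp_all flip: of_nat_mult)
  also have "\<dots> = ln (real k) + ln (real d)"
    using k d_pos by (simp add: ln_mult)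
  finally have ln_e: "ln (real e) \<le> ln (real k) + ln (real d)" .
  have "ln (real e) / real n \<le> ln (real k) / real n + ln (real d) / real n"
    using divide_right_mono[OF ln_e, of "real n"] by (simp add: add_divide_distrib)
  moreover have "ln (real d) * real j \<le> ln (real d) * (real n * real k)"
    using j(2) d_pos by (intro mult_left_mono) (simp_all flip: of_nat_mult)
  then have "ln (real d) / real n \<le> real k * (ln (real d) / real j)"
    using n j(1) by (simp add: field_simps)
  ultimately have "ln (real e) / real n \<le> ln (real k) / real n + real k * (ln (real d) / real j)"
    by linarith
  then show ?thesis
    using n j(1) False d_pos by (simp add: elog_div_of_nat)
qed

lemma elog_div_ge_blockwise:
  assumes k: "1 \<le> k" and n: "0 < n" and j: "0 < j" and d: "d \<le> e"
  shows "ereal (real k) * (elog d / ereal (real j))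
    \<le> ereal (real k * real n / real j) * (elog e / ereal (real n))"
proof (cases "d = 0")
  case True
  then show ?thesis using j k by (simp add: elog_div_of_nat)
next
  case False
  with d have "ln (real d) \<le> ln (real e)" "e \<noteq> 0" by simp_all
  then have "real k * (ln (real d) / real j) \<le> real k * (ln (real e) / real j)"
    using j by (intro mult_left_mono divide_right_mono) auto
  also have "\<dots> = real k * real n / real j * (ln (real e) / real n)"
    using n by simp
  finally have "real k * (ln (real d) / real j) \<le> real k * real n / real j * (ln (real e) / real n)" .
  then show ?thesis
    using n j False \<open>e \<noteq> 0\<close> by (simp add: elog_div_of_nat)
qed

lemma exp_growth_rate_le_blocks:
  fixes d e :: "nat \<Rightarrow> nat"
  assumes k: "1 \<le> k"
    and block: "\<And>n. 1 \<le> n \<Longrightarrow> \<exists>j. (n - 1) * k < j \<and> j \<le> n * k \<and> e n \<le> k * d j"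
  shows "exp_growth_rate e \<le> ereal (real k) * exp_growth_rate d"
proof -
  obtain r where r: "\<And>n. 1 \<le> n \<Longrightarrow> (n - 1) * k < r n \<and> r n \<le> n * k \<and> e n \<le> k * d (r n)"
    using block by metis
  define a where "a j = elog (d j) / ereal (real j)" for j
  have r_tendsto: "filterlim r sequentially sequentially"
    unfolding filterlim_at_top eventually_sequentially
  proof (intro allI exI[of _ "Suc _"] impI)
    fix Z n assume n: "Suc Z \<le> n"
    then have "Z \<le> n - 1" by simp
    also have "\<dots> \<le> (n - 1) * k" using k by simp
    also have "\<dots> < r n" using r[of n] n by simp
    finally show "Z \<le> r n" by simp
  qed
  have "exp_growth_rate e \<le> limsup (\<lambda>n. ereal (ln (real k) / real n) + ereal (real k) * a (r n))"
    unfolding exp_growth_rate_def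
  proof (intro Limsup_mono eventually_sequentiallyI)
    fix n :: nat assume n: "1 \<le> n"
    with r[OF n] show "elog (e n) / ereal (real n)
        \<le> ereal (ln (real k) / real n) + ereal (real k) * a (r n)"
      unfolding a_def by (intro elog_div_le_blockwise[OF k]) auto
  qed
  also have "\<dots> = limsup (\<lambda>n. ereal (real k) * a (r n))"
    using ereal_limsup_lim_add[OF tendsto_ereal[OF lim_const_over_n]] by (simp add: zero_ereal_def)
  also have "\<dots> = ereal (real k) * limsup (\<lambda>n. a (r n))"
    by (simp add: limsup_ereal_mult_left)
  also have "\<dots> \<le> ereal (real k) * exp_growth_rate d"
    unfolding exp_growth_rate_def a_def[abs_def]
    by (intro ereal_mult_left_mono limsup_comp_filterlim_le r_tendsto) simp
  finally show ?thesis .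
qed

definition block_index :: "nat \<Rightarrow> nat \<Rightarrow> nat" where
  "block_index k j = (j - 1) div k + 1"

lemma block_index_pos: "0 < block_index k j"
  by (simp add: block_index_def)

lemma block_index_lower:
  assumes "1 \<le> j"
  shows "(block_index k j - 1) * k < j"
  using assms div_times_less_eq_dividend[of "j - 1" k]
  unfolding block_index_def add_diff_cancel_right' by linarith

lemma block_index_upper:
  assumes "1 \<le> k"
  shows "j \<le> block_index k j * k"
proof -
  have "j \<le> (j - 1) div k * k + k"
    using mod_less_divisor[of k "j - 1"] div_mult_mod_eq[of "j - 1" k] assms by linarith
  then show ?thesis unfolding block_index_def by (simp add: algebra_simps)
qed

lemma filterlim_block_index:
  assumes "1 \<le> k"
  shows "filterlim (block_index k) sequentially sequentially"
  unfolding filterlim_at_top eventually_sequentially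
proof (intro allI exI[of _ "_ * k"] impI)
  fix Z j assume "Z * k \<le> j"
  then have "Z * k \<le> block_index k j * k" using block_index_upper[OF assms, of j] by linarith
  then show "Z \<le> block_index k j" using assms by simp
qed

lemma block_index_ratio_tendsto:
  assumes k: "1 \<le> k"
  shows "(\<lambda>j. real k * real (block_index k j) / real j) \<longlonglongrightarrow> 1"
proof (rule tendsto_sandwich)
  show "\<forall>\<^sub>F j in sequentially. 1 \<le> real k * real (block_index k j) / real j"
  proof (rule eventually_sequentiallyI)
    fix j :: nat assume "1 \<le> j"
    moreover have "real j \<le> real k * real (block_index k j)"
      using block_index_upper[OF k, of j] by (simp add: mult.commute flip: of_nat_mult)
    ultimately show "1 \<le> real k * real (block_index k j) / real j" by simp
  qed
  show "\<forall>\<^sub>F j in sequentially. real k * real (block_index k j) / real j \<le> 1 + real (k - 1) / real j"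
  proof (rule eventually_sequentiallyI)
    fix j :: nat assume j: "1 \<le> j"
    have "(block_index k j - 1) * k + 1 \<le> j" using block_index_lower[OF j, of k] by linarith
    then have "k * block_index k j \<le> j + (k - 1)"
      using block_index_pos[of k j] by (cases "block_index k j") (simp_all add: algebra_simps)
    then have "real k * real (block_index k j) \<le> real j + real (k - 1)"
      by (simp flip: of_nat_mult of_nat_add)
    then show "real k * real (block_index k j) / real j \<le> 1 + real (k - 1) / real j"
      using j by (simp add: field_simps)
  qed
  show "(\<lambda>j. 1 + real (k - 1) / real j) \<longlonglongrightarrow> 1"
    using tendsto_add[OF tendsto_const lim_const_over_n] by simp
qed simp

lemma blocks_le_exp_growth_rate:
  fixes d e :: "nat \<Rightarrow> nat"
  assumes k: "1 \<le> k"
    and block: "\<And>n j. (n - 1) * k < j \<Longrightarrow> j \<le> n * k \<Longrightarrow> d j \<le> e n"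
  shows "ereal (real k) * exp_growth_rate d \<le> exp_growth_rate e"
proof -
  define c where "c j = real k * real (block_index k j) / real j" for j
  define b where "b n = elog (e n) / ereal (real n)" for n
  have "ereal (real k) * exp_growth_rate d
      = limsup (\<lambda>j. ereal (real k) * (elog (d j) / ereal (real j)))"
    unfolding exp_growth_rate_def by (simp add: limsup_ereal_mult_left)
  also have "\<dots> \<le> limsup (\<lambda>j. ereal (c j) * b (block_index k j))"
  proof (intro Limsup_mono eventually_sequentiallyI)
    fix j :: nat assume j: "1 \<le> j"
    have "d j \<le> e (block_index k j)"
      using block[OF block_index_lower[OF j] block_index_upper[OF k]] .
    with j show "ereal (real k) * (elog (d j) / ereal (real j)) \<le> ereal (c j) * b (block_index k j)"
      unfolding c_def b_def by (intro elog_div_ge_blockwise[OF k block_index_pos]) auto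
  qed
  also have "\<dots> = limsup (\<lambda>j. b (block_index k j))"
    using ereal_limsup_lim_mult[OF tendsto_ereal[OF block_index_ratio_tendsto[OF k]]]
    unfolding c_def by (simp add: one_ereal_def)
  also have "\<dots> \<le> exp_growth_rate e"
    unfolding exp_growth_rate_def b_def[abs_def]
    by (rule limsup_comp_filterlim_le[OF filterlim_block_index[OF k]])
  finally show ?thesis .
qed

theorem proposition3p2:
  fixes scale :: "'k::field \<Rightarrow> 'a::ring_1 \<Rightarrow> 'a"
    and V :: "nat \<Rightarrow> 'a set" and k :: nat
  assumes "is_K_algebra scale"
    and "finitely_generated scale"
    and "is_filtration scale V"
    and "k \<ge> 1"
  shows "h_alg scale (\<lambda>n. V (n * k)) = ereal (real k) * h_alg scale V"
proof (cases "finite_dim_algebra scale")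
  case True
  then show ?thesis by (simp add: h_alg_def)
next
  case False
  have vs: "vector_space scale"
    using assms(1) by (simp add: is_K_algebra_def)
  define d where "d j = quot_dim scale (V j) (V (j - 1))" for j
  define e where "e n = quot_dim scale (V (n * k)) (V ((n - 1) * k))" for n
  have "exp_growth_rate e \<le> ereal (real k) * exp_growth_rate d"
    using quot_dim_filtration_block_le_step[OF vs assms(3,4)] unfolding d_def e_def
    by (intro exp_growth_rate_le_blocks assms(4))
  moreover have "ereal (real k) * exp_growth_rate d \<le> exp_growth_rate e"
    using quot_dim_filtration_step_le_block[OF vs assms(3)] unfolding d_def e_def
    by (intro blocks_le_exp_growth_rate assms(4))
  ultimately show ?thesis
    using False by (simp add: h_alg_def exp_growth_rate_def d_def e_def)
qed

end
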